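(* If $\mu>2$, then $C_c^\infty(\mathbb{R}_+)$ is dense in $\mathcal{D}_\mu(\mathbb{R}_+)$.
   Context: $\mathbb{R}_+=(0,\infty)$, $g'=dg/dx$, $g''=d^2g/dx^2$. For $\mu>0$, $C^\infty_\mu(\mathbb{R}_+)$ is the set of real smooth functions $g$ on $(0,\infty)$ with $\limsup_{x\to0}(|g(x)|+|g'(x)|)<\infty$ and $\lim_{x\to\infty}\left(x^{\mu+1}(g'(x))^2+x^\mu(g(x))^2\right)=0$. The space $\mathcal{D}_\mu(\mathbb{R}_+)$ is the Hilbert space completion of $\{g\in C^\infty_\mu(\mathbb{R}_+):\|g\|_{\mathcal{D}_\mu}<\infty\}$ with respect to the norm \[ \|g\|_{\mathcal{D}_\mu}=\left(4\int_0^\infty (g'')^2x^{\mu+1}dx+\int_0^\infty (g')^2(x+1)x^\mu dx+\int_0^\infty g^2x^{\mu-1}dx\right)^{1/2}. \] Density is with respect to this norm. *)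

theory Defs
  imports "HOL-Analysis.Analysis"
begin

definition smooth_on :: "real set \<Rightarrow> (real \<Rightarrow> real) \<Rightarrow> bool" where
  "smooth_on S g \<longleftrightarrow> (\<forall>n. \<forall>x\<in>S. ((deriv ^^ n) g) differentiable (at x))"

definition Cinf_mu :: "real \<Rightarrow> (real \<Rightarrow> real) \<Rightarrow> bool" where
  "Cinf_mu \<mu> g \<longleftrightarrow> smooth_on {0<..} g
     \<and> Limsup (at_right 0) (\<lambda>x. ereal (\<bar>g x\<bar> + \<bar>deriv g x\<bar>)) < \<infinity>
     \<and> ((\<lambda>x. x powr (\<mu> + 1) * (deriv g x)\<^sup>2 + x powr \<mu> * (g x)\<^sup>2) \<longlongrightarrow> 0) at_top"

definition D_norm_sq :: "real \<Rightarrow> (real \<Rightarrow> real) \<Rightarrow> ennreal" where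
  "D_norm_sq \<mu> g =
     4 * (\<integral>\<^sup>+ x. ennreal ((deriv (deriv g) x)\<^sup>2 * x powr (\<mu> + 1)) * indicator {0<..} x \<partial>lborel)
     + (\<integral>\<^sup>+ x. ennreal ((deriv g x)\<^sup>2 * (x + 1) * x powr \<mu>) * indicator {0<..} x \<partial>lborel)
     + (\<integral>\<^sup>+ x. ennreal ((g x)\<^sup>2 * x powr (\<mu> - 1)) * indicator {0<..} x \<partial>lborel)"

definition Cc_inf :: "(real \<Rightarrow> real) \<Rightarrow> bool" where
  "Cc_inf \<phi> \<longleftrightarrow> smooth_on {0<..} \<phi>
     \<and> (\<exists>a b. 0 < a \<and> a \<le> b \<and> (\<forall>x>0. x \<notin> {a..b} \<longrightarrow> \<phi> x = 0))"

end

theory Submission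
  imports Defs "HOL-Computational_Algebra.Polynomial"
begin

text \<open>
  Approximate g by g \<cdot> (\<chi>(x/d) - \<chi>(x/R)), where \<chi> is a smooth step from 0 on (-\<infinity>, 1]
  to 1 on [2, \<infinity>); it is smooth with support in [d, 2R]. The error is g \<cdot> c with
  c = 1 - \<chi>(x/d) + \<chi>(x/R), which vanishes on [2d, R]. By the product rule and
  (a + b + e)^2 \<le> 3 (a^2 + b^2 + e^2), its norm density is at most 3 c^2 times that of g plus
  terms carrying c' or c''. The first part is a tail of the convergent integral defining the
  norm of g. The derivative terms live on [d, 2d] and [R, 2R]. Near 0, g and g' are bounded
  while c' = O(1/d) and c'' = O(1/d^2), so against the weight x^(\<mu>+1) \<le> (2d)^(\<mu>+1) their
  integral is O(d^(\<mu>-2)), small exactly because \<mu> > 2. Near infinity c' = O(1/R) and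
  c'' = O(1/R^2), and the decay of x^(\<mu>+1) g'^2 + x^\<mu> g^2 built into the class C^\<infinity>_\<mu> makes
  their integral over [R, 2R] small.
\<close>

section \<open>Smooth functions on open sets\<close>

lemma differentiable_at_cong_ev:
  fixes f g :: "real \<Rightarrow> real"
  assumes "eventually (\<lambda>y. f y = g y) (nhds x)"
  shows "f differentiable at x \<longleftrightarrow> g differentiable at x"
  using DERIV_cong_ev[OF refl assms refl] unfolding real_differentiable_def by blast

lemma eventually_eq_on_open:
  assumes "open S" "x \<in> S" "\<And>y. y \<in> S \<Longrightarrow> f y = g y"
  shows "eventually (\<lambda>y. f y = g y) (nhds x)"
  using eventually_nhds_in_open[OF assms(1,2)] by (rule eventually_mono) (rule assms(3))

definition differentiable_upto :: "nat \<Rightarrow> real set \<Rightarrow> (real \<Rightarrow> real) \<Rightarrow> bool" where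
  "differentiable_upto n S f \<longleftrightarrow> (\<forall>m\<le>n. \<forall>x\<in>S. ((deriv ^^ m) f) differentiable (at x))"

lemma smooth_on_iff_differentiable_upto: "smooth_on S f \<longleftrightarrow> (\<forall>n. differentiable_upto n S f)"
  unfolding smooth_on_def differentiable_upto_def by blast

lemma differentiable_upto_0: "differentiable_upto 0 S f \<longleftrightarrow> (\<forall>x\<in>S. f differentiable (at x))"
  unfolding differentiable_upto_def by simp

lemma differentiable_upto_Suc:
  "differentiable_upto (Suc n) S f \<longleftrightarrow>
     (\<forall>x\<in>S. f differentiable (at x)) \<and> differentiable_upto n S (deriv f)"
proof -
  have "(\<forall>m\<le>Suc n. P m) \<longleftrightarrow> P 0 \<and> (\<forall>m\<le>n. P (Suc m))" for P :: "nat \<Rightarrow> bool"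
    by (metis Suc_le_mono le0 not0_implies_Suc)
  then show ?thesis
    unfolding differentiable_upto_def by (simp add: funpow_Suc_right del: funpow.simps)
qed

lemma differentiable_upto_cong:
  assumes "open S" "\<And>y. y \<in> S \<Longrightarrow> f y = g y" "differentiable_upto n S f"
  shows "differentiable_upto n S g"
  unfolding differentiable_upto_def
proof safe
  fix m x assume "m \<le> n" "x \<in> S"
  have "(deriv ^^ m) f y = (deriv ^^ m) g y" if "y \<in> S" for y
    using higher_deriv_cong_ev[OF eventually_eq_on_open[OF assms(1) that assms(2)] refl] .
  then have "eventually (\<lambda>y. (deriv ^^ m) f y = (deriv ^^ m) g y) (nhds x)"
    by (rule eventually_eq_on_open[OF assms(1) \<open>x \<in> S\<close>])
  moreover have "(deriv ^^ m) f differentiable at x"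
    using assms(3) \<open>m \<le> n\<close> \<open>x \<in> S\<close> unfolding differentiable_upto_def by blast
  ultimately show "(deriv ^^ m) g differentiable at x"
    using differentiable_at_cong_ev by blast
qed

lemma differentiable_upto_mono: "differentiable_upto n S f \<Longrightarrow> m \<le> n \<Longrightarrow> differentiable_upto m S f"
  unfolding differentiable_upto_def by auto

lemma differentiable_upto_const: "differentiable_upto n S (\<lambda>x. c)"
  by (induction n arbitrary: c) (simp_all add: differentiable_upto_0 differentiable_upto_Suc)

lemma differentiable_upto_add:
  assumes "open S"
  shows "differentiable_upto n S f \<Longrightarrow> differentiable_upto n S g \<Longrightarrow>
    differentiable_upto n S (\<lambda>x. f x + g x)"
proof (induction n arbitrary: f g)
  case 0 then show ?case by (auto simp: differentiable_upto_0)
next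
  case (Suc n)
  have "deriv f y + deriv g y = deriv (\<lambda>x. f x + g x) y" if "y \<in> S" for y
    using Suc.prems that
    by (subst deriv_add) (auto simp: differentiable_upto_Suc real_differentiable_def field_differentiable_def)
  moreover have "differentiable_upto n S (\<lambda>x. deriv f x + deriv g x)"
    using Suc by (auto simp: differentiable_upto_Suc)
  ultimately have "differentiable_upto n S (deriv (\<lambda>x. f x + g x))"
    by (rule differentiable_upto_cong[OF assms])
  then show ?case using Suc.prems by (auto simp: differentiable_upto_Suc)
qed

lemma differentiable_upto_mult:
  assumes "open S"
  shows "differentiable_upto n S f \<Longrightarrow> differentiable_upto n S g \<Longrightarrow>
    differentiable_upto n S (\<lambda>x. f x * g x)"
proof (induction n arbitrary: f g)
  case 0 then show ?case by (auto simp: differentiable_upto_0)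
next
  case (Suc n)
  have "deriv f y * g y + f y * deriv g y = deriv (\<lambda>x. f x * g x) y" if "y \<in> S" for y
    using Suc.prems that
    by (subst deriv_mult) (auto simp: differentiable_upto_Suc real_differentiable_def field_differentiable_def)
  moreover have "differentiable_upto n S (\<lambda>x. deriv f x * g x + f x * deriv g x)"
    using Suc differentiable_upto_mono[of "Suc n" S]
    by (intro differentiable_upto_add[OF assms] Suc.IH) (auto simp: differentiable_upto_Suc)
  ultimately have "differentiable_upto n S (deriv (\<lambda>x. f x * g x))"
    by (rule differentiable_upto_cong[OF assms])
  then show ?case using Suc.prems by (auto simp: differentiable_upto_Suc)
qed

lemma smooth_on_const: "smooth_on S (\<lambda>x. c)"
  by (simp add: smooth_on_iff_differentiable_upto differentiable_upto_const)

lemma smooth_on_add: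
  "open S \<Longrightarrow> smooth_on S f \<Longrightarrow> smooth_on S g \<Longrightarrow> smooth_on S (\<lambda>x. f x + g x)"
  by (simp add: smooth_on_iff_differentiable_upto differentiable_upto_add)

lemma smooth_on_mult:
  "open S \<Longrightarrow> smooth_on S f \<Longrightarrow> smooth_on S g \<Longrightarrow> smooth_on S (\<lambda>x. f x * g x)"
  by (simp add: smooth_on_iff_differentiable_upto differentiable_upto_mult)

lemma smooth_on_diff:
  assumes "open S" "smooth_on S f" "smooth_on S g"
  shows "smooth_on S (\<lambda>x. f x - g x)"
  using smooth_on_add[OF assms(1,2) smooth_on_mult[OF assms(1) smooth_on_const assms(3)], of "-1"]
  by simp

lemma smooth_on_subset: "smooth_on S f \<Longrightarrow> T \<subseteq> S \<Longrightarrow> smooth_on T f"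
  unfolding smooth_on_def by blast

lemma smooth_on_deriv: "smooth_on S f \<Longrightarrow> smooth_on S (deriv f)"
  by (metis differentiable_upto_Suc smooth_on_iff_differentiable_upto)

lemma smooth_on_imp_differentiable: "smooth_on S f \<Longrightarrow> x \<in> S \<Longrightarrow> f differentiable (at x)"
  by (metis differentiable_upto_0 smooth_on_iff_differentiable_upto)

lemma smooth_on_imp_DERIV:
  "smooth_on S f \<Longrightarrow> x \<in> S \<Longrightarrow> (f has_real_derivative deriv f x) (at x)"
  using smooth_on_imp_differentiable DERIV_deriv_iff_real_differentiable by blast

lemma smooth_on_imp_continuous_on: "smooth_on S f \<Longrightarrow> continuous_on S f"
  by (meson continuous_at_imp_continuous_on differentiable_imp_continuous_within
      smooth_on_imp_differentiable)

lemma smooth_on_inverse: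
  assumes "open S" "smooth_on S h" "\<And>x. x \<in> S \<Longrightarrow> h x \<noteq> 0"
  shows "smooth_on S (\<lambda>x. inverse (h x))"
proof -
  have "differentiable_upto n S (\<lambda>x. inverse (h x))" for n
  proof (induction n)
    case 0
    show ?case using assms unfolding differentiable_upto_0 real_differentiable_def
      by (blast intro: DERIV_inverse_fun smooth_on_imp_DERIV)
  next
    case (Suc n)
    have "- deriv h y * (inverse (h y) * inverse (h y)) = deriv (\<lambda>x. inverse (h x)) y"
      if "y \<in> S" for y
      using DERIV_inverse_fun[OF smooth_on_imp_DERIV[OF assms(2) that] assms(3)[OF that]]
      by (auto dest!: DERIV_imp_deriv simp: power2_eq_square inverse_mult_distrib)
    moreover have "differentiable_upto n S (\<lambda>y. - deriv h y * (inverse (h y) * inverse (h y)))"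
    proof -
      have "differentiable_upto n S (\<lambda>y. - deriv h y)"
        using differentiable_upto_mult[OF assms(1) differentiable_upto_const[of n S "-1"], of "deriv h"]
          smooth_on_deriv[OF assms(2)] by (simp add: smooth_on_iff_differentiable_upto)
      then show ?thesis using Suc differentiable_upto_mult[OF assms(1)] by blast
    qed
    ultimately have "differentiable_upto n S (deriv (\<lambda>x. inverse (h x)))"
      by (rule differentiable_upto_cong[OF assms(1)])
    then show ?case
      using Suc.IH differentiable_upto_mono[OF Suc.IH, of 0] by (simp add: differentiable_upto_Suc differentiable_upto_0)
  qed
  then show ?thesis by (simp add: smooth_on_iff_differentiable_upto)
qed

lemma smooth_on_compose_affine:
  assumes "smooth_on UNIV h"
  shows "smooth_on UNIV (\<lambda>x. h (a * x + b))"
proof -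
  have "differentiable_upto n UNIV (\<lambda>x. h (a * x + b))" if "smooth_on UNIV h" for n h
    using that
  proof (induction n arbitrary: h)
    case 0
    have "((\<lambda>x. h (a * x + b)) has_real_derivative deriv h (a * x + b) * a) (at x)" for x
      by (rule DERIV_chain2[OF smooth_on_imp_DERIV[OF 0 UNIV_I]]) (auto intro!: derivative_eq_intros)
    then show ?case unfolding differentiable_upto_0 real_differentiable_def by blast
  next
    case (Suc n)
    have "deriv (\<lambda>x. h (a * x + b)) = (\<lambda>y. a * deriv h (a * y + b))"
    proof
      fix y
      have "((\<lambda>x. h (a * x + b)) has_real_derivative deriv h (a * y + b) * a) (at y)"
        by (rule DERIV_chain2[OF smooth_on_imp_DERIV[OF Suc.prems UNIV_I]]) (auto intro!: derivative_eq_intros)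
      then show "deriv (\<lambda>x. h (a * x + b)) y = a * deriv h (a * y + b)"
        by (simp add: DERIV_imp_deriv mult.commute)
    qed
    moreover have "differentiable_upto n UNIV (\<lambda>y. a * deriv h (a * y + b))"
      using Suc by (intro differentiable_upto_mult differentiable_upto_const) (auto simp: smooth_on_deriv)
    moreover have "differentiable_upto 0 UNIV (\<lambda>x. h (a * x + b))"
      using Suc.IH[OF Suc.prems] differentiable_upto_mono by blast
    ultimately show ?case by (simp add: differentiable_upto_Suc differentiable_upto_0)
  qed
  with assms show ?thesis by (simp add: smooth_on_iff_differentiable_upto)
qed

section \<open>A smooth step function\<close>

lemma poly_times_exp_neg_tendsto_0: "((\<lambda>t::real. poly p t * exp (- t)) \<longlongrightarrow> 0) at_top"
proof -
  have "((\<lambda>t::real. \<Sum>i\<le>degree p. coeff p i * (t ^ i / exp t)) \<longlongrightarrow> (\<Sum>i\<le>degree p. coeff p i * 0)) at_top"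
    by (intro tendsto_sum tendsto_mult tendsto_const tendsto_power_div_exp_0)
  moreover have "(\<lambda>t::real. \<Sum>i\<le>degree p. coeff p i * (t ^ i / exp t)) = (\<lambda>t. poly p t * exp (- t))"
    by (rule ext) (simp add: poly_altdef exp_minus sum_distrib_right divide_inverse mult.assoc)
  ultimately show ?thesis by simp
qed

definition poly_exp_inv :: "real poly \<Rightarrow> real \<Rightarrow> real" where
  "poly_exp_inv p x = (if x > 0 then poly p (inverse x) * exp (- inverse x) else 0)"

text \<open>d/dx (p(1/x) exp(-1/x)) = q(1/x) exp(-1/x) with q(t) = t^2 (p(t) - p'(t)).\<close>
definition poly_exp_inv_step :: "real poly \<Rightarrow> real poly" where
  "poly_exp_inv_step p = pCons 0 (pCons 0 (p - pderiv p))"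

lemma poly_exp_inv_DERIV_0: "(poly_exp_inv p has_real_derivative 0) (at 0)"
proof -
  have "((\<lambda>y. (poly_exp_inv p y - poly_exp_inv p 0) / (y - 0)) \<longlongrightarrow> 0) (at (0::real))"
  proof (rule filterlim_split_at)
    show "((\<lambda>y. (poly_exp_inv p y - poly_exp_inv p 0) / (y - 0)) \<longlongrightarrow> 0) (at_left (0::real))"
      by (rule tendsto_eventually) (simp add: eventually_at_filter poly_exp_inv_def)
  next
    have "((\<lambda>y. poly (pCons 0 p) (inverse y) * exp (- inverse y)) \<longlongrightarrow> 0) (at_right (0::real))"
      by (rule filterlim_compose[OF poly_times_exp_neg_tendsto_0 filterlim_inverse_at_top_right])
    moreover have "\<forall>\<^sub>F y in at_right (0::real). poly (pCons 0 p) (inverse y) * exp (- inverse y)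
        = (poly_exp_inv p y - poly_exp_inv p 0) / (y - 0)"
      by (rule eventually_mono[OF eventually_at_right_less]) (simp add: poly_exp_inv_def field_simps)
    ultimately show "((\<lambda>y. (poly_exp_inv p y - poly_exp_inv p 0) / (y - 0)) \<longlongrightarrow> 0) (at_right (0::real))"
      using tendsto_cong by force
  qed
  then show ?thesis by (simp add: has_field_derivative_iff)
qed

lemma poly_exp_inv_DERIV:
  "(poly_exp_inv p has_real_derivative poly_exp_inv (poly_exp_inv_step p) x) (at x)"
proof (cases x "0::real" rule: linorder_cases)
  case greater
  have "((\<lambda>y. poly p (inverse y) * exp (- inverse y)) has_real_derivative
        poly (pderiv p) (inverse x) * (- (inverse x ^ 2)) * exp (- inverse x)
        + poly p (inverse x) * (exp (- inverse x) * (inverse x ^ 2))) (at x)"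
    using greater
    by (auto intro!: derivative_eq_intros DERIV_chain2[OF poly_DERIV] simp: power2_eq_square)
  moreover have "poly (pderiv p) (inverse x) * (- (inverse x ^ 2)) * exp (- inverse x)
        + poly p (inverse x) * (exp (- inverse x) * (inverse x ^ 2))
      = poly_exp_inv (poly_exp_inv_step p) x"
    using greater by (simp add: poly_exp_inv_def poly_exp_inv_step_def algebra_simps power2_eq_square)
  ultimately have "((\<lambda>y. poly p (inverse y) * exp (- inverse y)) has_real_derivative
      poly_exp_inv (poly_exp_inv_step p) x) (at x)"
    by simp
  then show ?thesis
    by (rule has_field_derivative_transform_within_open[where S="{0<..}"])
       (use greater in \<open>auto simp: poly_exp_inv_def\<close>)
next
  case less
  have "((\<lambda>y. 0) has_real_derivative poly_exp_inv (poly_exp_inv_step p) x) (at x)"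
    using less by (simp add: poly_exp_inv_def)
  then show ?thesis
    by (rule has_field_derivative_transform_within_open[where S="{..<0}"])
       (use less in \<open>auto simp: poly_exp_inv_def\<close>)
next
  case equal
  then show ?thesis using poly_exp_inv_DERIV_0 by (simp add: poly_exp_inv_def)
qed

lemma higher_deriv_poly_exp_inv:
  "(deriv ^^ n) (poly_exp_inv p) = poly_exp_inv ((poly_exp_inv_step ^^ n) p)"
proof (induction n arbitrary: p)
  case (Suc n)
  have "deriv (poly_exp_inv p) = poly_exp_inv (poly_exp_inv_step p)"
    using DERIV_imp_deriv[OF poly_exp_inv_DERIV] by blast
  with Suc show ?case by (simp add: funpow_Suc_right del: funpow.simps)
qed simp

lemma smooth_on_poly_exp_inv: "smooth_on UNIV (poly_exp_inv p)"
  unfolding smooth_on_def higher_deriv_poly_exp_inv real_differentiable_def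
  using poly_exp_inv_DERIV by blast

definition exp_neg_inv :: "real \<Rightarrow> real" where
  "exp_neg_inv x = (if x > 0 then exp (- inverse x) else 0)"

lemma smooth_on_exp_neg_inv: "smooth_on UNIV exp_neg_inv"
proof -
  have "exp_neg_inv = poly_exp_inv 1"
    by (rule ext) (simp add: exp_neg_inv_def poly_exp_inv_def)
  then show ?thesis by (metis smooth_on_poly_exp_inv)
qed

lemma exp_neg_inv_pos: "x > 0 \<Longrightarrow> exp_neg_inv x > 0"
  and exp_neg_inv_nonneg: "exp_neg_inv x \<ge> 0"
  and exp_neg_inv_eq_0: "x \<le> 0 \<Longrightarrow> exp_neg_inv x = 0"
  by (auto simp: exp_neg_inv_def)

definition smooth_step :: "real \<Rightarrow> real" where
  "smooth_step t = exp_neg_inv (t - 1) / (exp_neg_inv (t - 1) + exp_neg_inv (2 - t))"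

lemma smooth_step_denominator_pos: "exp_neg_inv (t - 1) + exp_neg_inv (2 - t) > 0"
  using exp_neg_inv_pos[of "t - 1"] exp_neg_inv_pos[of "2 - t"]
    exp_neg_inv_nonneg[of "t - 1"] exp_neg_inv_nonneg[of "2 - t"]
  by (cases "t > 1") auto

lemma smooth_on_smooth_step: "smooth_on UNIV smooth_step"
proof -
  have shifts: "smooth_on UNIV (\<lambda>t. exp_neg_inv (t - 1))" "smooth_on UNIV (\<lambda>t. exp_neg_inv (2 - t))"
    using smooth_on_compose_affine[OF smooth_on_exp_neg_inv, of 1 "-1"]
      smooth_on_compose_affine[OF smooth_on_exp_neg_inv, of "-1" 2] by simp_all
  have "smooth_on UNIV (\<lambda>t. inverse (exp_neg_inv (t - 1) + exp_neg_inv (2 - t)))"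
    using smooth_step_denominator_pos
    by (intro smooth_on_inverse smooth_on_add shifts) (auto simp: less_imp_neq[symmetric])
  then show ?thesis
    unfolding smooth_step_def[abs_def] divide_inverse by (intro smooth_on_mult shifts) auto
qed

lemma smooth_step_eq_0: "t \<le> 1 \<Longrightarrow> smooth_step t = 0"
  by (simp add: smooth_step_def exp_neg_inv_eq_0)

lemma smooth_step_eq_1: "t \<ge> 2 \<Longrightarrow> smooth_step t = 1"
  using smooth_step_denominator_pos[of t] by (simp add: smooth_step_def exp_neg_inv_eq_0)

lemma smooth_step_bounds: "0 \<le> smooth_step t" "smooth_step t \<le> 1"
  using smooth_step_denominator_pos[of t] exp_neg_inv_nonneg[of "t - 1"] exp_neg_inv_nonneg[of "2 - t"]
  by (auto simp: smooth_step_def field_simps)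

lemma smooth_step_derivs_eq_0:
  assumes "t < 1 \<or> t > 2"
  shows "deriv smooth_step t = 0" "deriv (deriv smooth_step) t = 0"
proof -
  define S where "S = (if t < 1 then {..<1} else {(2::real)<..})"
  have S: "open S" "t \<in> S" using assms by (auto simp: S_def)
  have "smooth_step y = (if t < 1 then 0 else 1)" if "y \<in> S" for y
    using that assms by (auto simp: S_def smooth_step_eq_0 smooth_step_eq_1 split: if_splits)
  then have "deriv smooth_step y = 0" if "y \<in> S" for y
    using deriv_cong_ev[OF eventually_eq_on_open[OF S(1) that], of _ "\<lambda>_. if t < 1 then 0 else 1"]
    by simp
  then show "deriv smooth_step t = 0" "deriv (deriv smooth_step) t = 0"
    using S deriv_cong_ev[OF eventually_eq_on_open[OF S], of _ "\<lambda>_. 0"] by auto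
qed

lemma smooth_step_derivs_bounded:
  obtains C where "0 < C" "\<And>t. \<bar>deriv smooth_step t\<bar> \<le> C \<and> \<bar>deriv (deriv smooth_step) t\<bar> \<le> C"
proof -
  have "continuous_on {1..2} (deriv smooth_step)" "continuous_on {1..2} (deriv (deriv smooth_step))"
    using smooth_on_imp_continuous_on smooth_on_subset smooth_on_deriv smooth_on_smooth_step
    by (metis subset_UNIV)+
  then have "bounded (deriv smooth_step ` {1..2})" "bounded (deriv (deriv smooth_step) ` {1..2})"
    by (simp_all add: compact_continuous_image compact_imp_bounded)
  then obtain a b where a: "\<forall>t\<in>{1..2}. \<bar>deriv smooth_step t\<bar> \<le> a"
    and b: "\<forall>t\<in>{1..2}. \<bar>deriv (deriv smooth_step) t\<bar> \<le> b"
    unfolding bounded_real by blast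
  have "\<bar>deriv smooth_step t\<bar> \<le> max 1 (max a b) \<and> \<bar>deriv (deriv smooth_step) t\<bar> \<le> max 1 (max a b)" for t
  proof (cases "t < 1 \<or> t > 2")
    case True
    then show ?thesis using smooth_step_derivs_eq_0 by simp
  next
    case False
    then have "t \<in> {1..2}" by auto
    then show ?thesis using a b by (meson max.coboundedI1 max.coboundedI2)
  qed
  then show ?thesis by (rule that[rotated]) simp
qed

section \<open>The density of the norm and its tails\<close>

lemma borel_measurable_ennreal_indicator_continuous_on:
  fixes F :: "real \<Rightarrow> real"
  assumes "continuous_on S F" "S \<in> sets borel"
  shows "(\<lambda>x. ennreal (F x) * indicator S x) \<in> borel_measurable borel"
proof -
  have "(\<lambda>x. indicator S x *\<^sub>R F x) \<in> borel_measurable borel"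
    using borel_measurable_continuous_on_indicator[OF assms(2,1)] .
  then have "(\<lambda>x. ennreal (indicator S x *\<^sub>R F x)) \<in> borel_measurable borel"
    by measurable
  moreover have "(\<lambda>x. ennreal (indicator S x *\<^sub>R F x)) = (\<lambda>x. ennreal (F x) * indicator S x)"
    by (rule ext) (simp add: indicator_def)
  ultimately show ?thesis by simp
qed

lemma nn_integral_indicator_decseq_less:
  fixes P :: "'a \<Rightarrow> ennreal"
  assumes P: "P \<in> borel_measurable M" "(\<integral>\<^sup>+x. P x \<partial>M) < \<infinity>"
    and A: "decseq A" "\<And>i. A i \<in> sets M" "(\<Inter>i. A i) = {}"
    and "0 < s"
  shows "\<exists>i. (\<integral>\<^sup>+x. P x * indicator (A i) x \<partial>M) < s"
proof -
  define f where "f i x = P x * indicator (A i) x" for i x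
  have "decseq f"
  proof (intro decseq_SucI le_funI)
    fix i x
    have "indicator (A (Suc i)) x \<le> (indicator (A i) x :: ennreal)"
      using decseq_SucD[OF A(1), of i] by (auto simp: indicator_def)
    then show "f (Suc i) x \<le> f i x"
      unfolding f_def by (rule mult_left_mono) simp
  qed
  moreover have "f i \<in> borel_measurable M" for i
    unfolding f_def using P(1) A(2)[of i] by simp
  moreover have "(\<integral>\<^sup>+x. f i x \<partial>M) < \<infinity>" for i
  proof -
    have "(\<integral>\<^sup>+x. f i x \<partial>M) \<le> (\<integral>\<^sup>+x. P x \<partial>M)"
      unfolding f_def by (intro nn_integral_mono) (simp add: indicator_def)
    then show ?thesis using P(2) by (rule le_less_trans)
  qed
  ultimately have "(\<integral>\<^sup>+x. (INF i. f i x) \<partial>M) = (INF i. integral\<^sup>N M (f i))"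
    by (rule nn_integral_monotone_convergence_INF_decseq)
  moreover have "(INF i. f i x) = 0" for x
  proof -
    obtain i where "x \<notin> A i" using A(3) by blast
    then have "f i x = 0" by (simp add: f_def)
    then show ?thesis using INF_lower[of i UNIV "\<lambda>i. f i x"] by simp
  qed
  ultimately have "(INF i. integral\<^sup>N M (f i)) < s" using \<open>0 < s\<close> by simp
  then obtain i where "integral\<^sup>N M (f i) < s" by (auto simp: INF_less_iff)
  moreover have "integral\<^sup>N M (f i) = (\<integral>\<^sup>+x. P x * indicator (A i) x \<partial>M)"
    by (intro nn_integral_cong) (simp add: f_def)
  ultimately show ?thesis by auto
qed

lemma ennreal_4_plus:
  fixes a b c :: real
  assumes "0 \<le> a" "0 \<le> b" "0 \<le> c"
  shows "ennreal (4 * a + b + c) = 4 * ennreal a + ennreal b + ennreal c"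
  using assms by (simp add: ennreal_plus ennreal_mult)

definition D_density :: "real \<Rightarrow> (real \<Rightarrow> real) \<Rightarrow> real \<Rightarrow> real" where
  "D_density \<mu> g x = 4 * ((deriv (deriv g) x)\<^sup>2 * x powr (\<mu> + 1))
     + (deriv g x)\<^sup>2 * (x + 1) * x powr \<mu> + (g x)\<^sup>2 * x powr (\<mu> - 1)"

lemma D_density_nonneg: "0 < x \<Longrightarrow> 0 \<le> D_density \<mu> g x"
  unfolding D_density_def by (intro add_nonneg_nonneg mult_nonneg_nonneg) auto

lemma continuous_on_D_density:
  assumes "smooth_on {0<..} g"
  shows "continuous_on {0<..} (D_density \<mu> g)"
proof -
  have "continuous_on {0<..} g" "continuous_on {0<..} (deriv g)"
    "continuous_on {0<..} (deriv (deriv g))"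
    using assms by (simp_all add: smooth_on_imp_continuous_on smooth_on_deriv)
  then show ?thesis
    unfolding D_density_def[abs_def] by (intro continuous_intros) auto
qed

lemma D_norm_sq_eq_nn_integral:
  assumes "smooth_on {0<..} g"
  shows "D_norm_sq \<mu> g = (\<integral>\<^sup>+x. ennreal (D_density \<mu> g x) * indicator {0<..} x \<partial>lborel)"
proof -
  have cont: "continuous_on {0<..} g" "continuous_on {0<..} (deriv g)"
    "continuous_on {0<..} (deriv (deriv g))"
    using assms by (simp_all add: smooth_on_imp_continuous_on smooth_on_deriv)
  have "continuous_on {0<..} (\<lambda>x. (deriv (deriv g) x)\<^sup>2 * x powr (\<mu> + 1))"
    "continuous_on {0<..} (\<lambda>x. (deriv g x)\<^sup>2 * (x + 1) * x powr \<mu>)"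
    "continuous_on {0<..} (\<lambda>x. (g x)\<^sup>2 * x powr (\<mu> - 1))"
    by (intro continuous_intros cont; simp)+
  note [measurable] = this[THEN borel_measurable_ennreal_indicator_continuous_on, OF borel_open, OF open_greaterThan]
  have "D_norm_sq \<mu> g = (\<integral>\<^sup>+x. 4 * (ennreal ((deriv (deriv g) x)\<^sup>2 * x powr (\<mu> + 1)) * indicator {0<..} x)
      + ennreal ((deriv g x)\<^sup>2 * (x + 1) * x powr \<mu>) * indicator {0<..} x
      + ennreal ((g x)\<^sup>2 * x powr (\<mu> - 1)) * indicator {0<..} x \<partial>lborel)"
    unfolding D_norm_sq_def by (simp add: nn_integral_add nn_integral_cmult)
  also have "\<dots> = (\<integral>\<^sup>+x. ennreal (D_density \<mu> g x) * indicator {0<..} x \<partial>lborel)"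
  proof (rule nn_integral_cong)
    fix x :: real
    show "4 * (ennreal ((deriv (deriv g) x)\<^sup>2 * x powr (\<mu> + 1)) * indicator {0<..} x)
      + ennreal ((deriv g x)\<^sup>2 * (x + 1) * x powr \<mu>) * indicator {0<..} x
      + ennreal ((g x)\<^sup>2 * x powr (\<mu> - 1)) * indicator {0<..} x
      = ennreal (D_density \<mu> g x) * indicator {0<..} x"
    proof (cases "x > 0")
      case True
      then have "0 \<le> (deriv (deriv g) x)\<^sup>2 * x powr (\<mu> + 1)" "0 \<le> (deriv g x)\<^sup>2 * (x + 1) * x powr \<mu>"
        "0 \<le> (g x)\<^sup>2 * x powr (\<mu> - 1)"
        by simp_all
      with True show ?thesis unfolding D_density_def by (subst ennreal_4_plus) simp_all
    qed simp
  qed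
  finally show ?thesis .
qed

lemma Inter_shrinking_tails_empty: "(\<Inter>i. {0<..1 / real (Suc i)} \<union> {real (Suc i)..}) = {}"
proof (rule equals0I)
  fix x assume x: "x \<in> (\<Inter>i. {0<..1 / real (Suc i)} \<union> {real (Suc i)..})"
  then have "x > 0" by auto
  then obtain i :: nat where i: "1 / Suc i < x" by (metis nat_approx_posE)
  obtain j :: nat where j: "x < j" using reals_Archimedean2 by blast
  have "1 / real (Suc (max i j)) \<le> 1 / Suc i"
    by (intro divide_left_mono) auto
  moreover have "real j \<le> Suc (max i j)" by simp
  moreover have "x \<in> {0<..1 / real (Suc (max i j))} \<union> {real (Suc (max i j))..}" using x by blast
  ultimately show False using i j by auto
qed

lemma D_density_tails_less:
  assumes "smooth_on {0<..} g" "D_norm_sq \<mu> g < \<infinity>" "0 < s"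
  shows "\<exists>\<delta>>0. \<exists>R. (\<integral>\<^sup>+x. ennreal (D_density \<mu> g x) * indicator ({0<..\<delta>} \<union> {R..}) x \<partial>lborel) < s"
proof -
  define P where "P x = ennreal (D_density \<mu> g x) * indicator {0<..} x" for x
  define A where "A i = {0<..1 / Suc i} \<union> {real (Suc i)..}" for i
  have "P \<in> borel_measurable lborel"
    using borel_measurable_ennreal_indicator_continuous_on[OF continuous_on_D_density[OF assms(1)]]
    unfolding P_def by simp
  moreover have "(\<integral>\<^sup>+x. P x \<partial>lborel) < \<infinity>"
    using assms(1,2) by (simp add: P_def D_norm_sq_eq_nn_integral)
  moreover have "decseq A"
  proof (rule decseq_SucI)
    fix i
    have "1 / real (Suc (Suc i)) \<le> 1 / Suc i" by (intro divide_left_mono) auto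
    then show "A (Suc i) \<subseteq> A i" by (auto simp: A_def)
  qed
  moreover have "(\<Inter>i. A i) = {}"
    unfolding A_def by (rule Inter_shrinking_tails_empty)
  moreover have "A i \<in> sets lborel" for i by (simp add: A_def)
  ultimately obtain i where "(\<integral>\<^sup>+x. P x * indicator (A i) x \<partial>lborel) < s"
    using nn_integral_indicator_decseq_less[of P lborel A s] assms(3) by blast
  moreover have "P x * indicator (A i) x = ennreal (D_density \<mu> g x) * indicator (A i) x" for x
    by (cases "x > 0") (simp_all add: P_def A_def)
  ultimately have "(\<integral>\<^sup>+x. ennreal (D_density \<mu> g x)
      * indicator ({0<..1 / Suc i} \<union> {real (Suc i)..}) x \<partial>lborel) < s"
    by (simp add: A_def)
  then show ?thesis by (intro exI[of _ "1 / Suc i"] exI[of _ "real (Suc i)"] conjI) simp_all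
qed

lemma square_sum2_le: "((a::real) + b)\<^sup>2 \<le> 2 * (a\<^sup>2 + b\<^sup>2)"
proof -
  have "0 \<le> (a - b)\<^sup>2" by simp
  then show ?thesis by (simp add: power2_eq_square algebra_simps)
qed

lemma square_sum3_le: "((a::real) + b + c)\<^sup>2 \<le> 3 * (a\<^sup>2 + b\<^sup>2 + c\<^sup>2)"
proof -
  have "0 \<le> (a - b)\<^sup>2 + (b - c)\<^sup>2 + (a - c)\<^sup>2" by simp
  then show ?thesis by (simp add: power2_eq_square algebra_simps)
qed

lemma product_rule_square_le:
  fixes G0 G1 G2 c c1 c2 w0 w1 w2 :: real
  assumes "0 \<le> w0" "0 \<le> w1" "0 \<le> w2"
  shows "4 * ((G2 * c + 2 * G1 * c1 + G0 * c2)\<^sup>2 * w2) + (G1 * c + G0 * c1)\<^sup>2 * w1 + (G0 * c)\<^sup>2 * w0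
    \<le> 3 * c\<^sup>2 * (4 * (G2\<^sup>2 * w2) + G1\<^sup>2 * w1 + G0\<^sup>2 * w0)
      + (48 * (G1\<^sup>2 * c1\<^sup>2 * w2) + 12 * (G0\<^sup>2 * c2\<^sup>2 * w2) + 2 * (G0\<^sup>2 * c1\<^sup>2 * w1))"
proof -
  have "(G2 * c + 2 * G1 * c1 + G0 * c2)\<^sup>2 * w2 \<le> 3 * ((G2 * c)\<^sup>2 + (2 * G1 * c1)\<^sup>2 + (G0 * c2)\<^sup>2) * w2"
    using square_sum3_le assms(3) by (rule mult_right_mono)
  moreover have "(G1 * c + G0 * c1)\<^sup>2 * w1 \<le> 2 * ((G1 * c)\<^sup>2 + (G0 * c1)\<^sup>2) * w1"
    using square_sum2_le assms(2) by (rule mult_right_mono)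
  moreover have "0 \<le> c\<^sup>2 * G1\<^sup>2 * w1" "0 \<le> c\<^sup>2 * G0\<^sup>2 * w0"
    using assms by simp_all
  ultimately show ?thesis by (simp add: power_mult_distrib algebra_simps)
qed

definition cutoff_density :: "real \<Rightarrow> (real \<Rightarrow> real) \<Rightarrow> (real \<Rightarrow> real) \<Rightarrow> real \<Rightarrow> real" where
  "cutoff_density \<mu> g c x =
     48 * ((deriv g x)\<^sup>2 * (deriv c x)\<^sup>2 * x powr (\<mu> + 1))
     + 12 * ((g x)\<^sup>2 * (deriv (deriv c) x)\<^sup>2 * x powr (\<mu> + 1))
     + 2 * ((g x)\<^sup>2 * (deriv c x)\<^sup>2 * ((x + 1) * x powr \<mu>))"

lemma D_density_mult_le:
  assumes S: "open S" "x \<in> S" and "0 < x" and g: "smooth_on S g" and c: "smooth_on S c"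
  shows "D_density \<mu> (\<lambda>y. g y * c y) x \<le> 3 * (c x)\<^sup>2 * D_density \<mu> g x + cutoff_density \<mu> g c x"
proof -
  have g1: "smooth_on S (deriv g)" and c1: "smooth_on S (deriv c)"
    using g c by (simp_all add: smooth_on_deriv)
  have d1: "deriv (\<lambda>y. g y * c y) y = deriv g y * c y + g y * deriv c y" if "y \<in> S" for y
    using DERIV_imp_deriv[OF DERIV_mult[OF smooth_on_imp_DERIV[OF g that] smooth_on_imp_DERIV[OF c that]]]
    by (simp add: algebra_simps)
  have "deriv (deriv (\<lambda>y. g y * c y)) x = deriv (\<lambda>y. deriv g y * c y + g y * deriv c y) x"
    by (rule deriv_cong_ev[OF eventually_eq_on_open[OF S d1] refl])
  also have "\<dots> = deriv (deriv g) x * c x + 2 * deriv g x * deriv c x + g x * deriv (deriv c) x"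
    using DERIV_imp_deriv[OF DERIV_add[OF
        DERIV_mult[OF smooth_on_imp_DERIV[OF g1 S(2)] smooth_on_imp_DERIV[OF c S(2)]]
        DERIV_mult[OF smooth_on_imp_DERIV[OF g S(2)] smooth_on_imp_DERIV[OF c1 S(2)]]]]
    by (simp add: algebra_simps)
  finally have d2: "deriv (deriv (\<lambda>y. g y * c y)) x
      = deriv (deriv g) x * c x + 2 * deriv g x * deriv c x + g x * deriv (deriv c) x" .
  have "0 \<le> x powr (\<mu> - 1)" "0 \<le> (x + 1) * x powr \<mu>" "0 \<le> x powr (\<mu> + 1)"
    using \<open>0 < x\<close> by simp_all
  from product_rule_square_le[OF this, of "deriv (deriv g) x" "c x" "deriv g x" "deriv c x" "g x"
      "deriv (deriv c) x"]
  show ?thesis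
    unfolding D_density_def cutoff_density_def d1[OF S(2)] d2
    by (simp add: power_mult_distrib mult.assoc)
qed

lemma square_le_square_if_abs_le: "\<bar>a::real\<bar> \<le> b \<Longrightarrow> a\<^sup>2 \<le> b\<^sup>2"
  by (metis abs_ge_zero power2_abs power_mono)

lemma mult3_mono:
  fixes a b c A B C :: real
  assumes "0 \<le> a" "a \<le> A" "0 \<le> b" "b \<le> B" "0 \<le> c" "c \<le> C"
  shows "a * b * c \<le> A * B * C"
  using assms by (intro mult_mono) (auto intro: mult_mono order.trans[OF _ assms(2)])

lemma powr_le_powr_mult_power:
  fixes x y a :: real
  assumes "0 < x" "x \<le> y" "0 \<le> a"
  shows "x powr (a + real k) \<le> y powr a * y ^ k"
proof -
  have "x powr (a + real k) \<le> y powr (a + real k)"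
    using assms by (intro powr_mono2) auto
  also have "\<dots> = y powr a * y ^ k"
    using assms by (simp add: powr_add powr_realpow)
  finally show ?thesis .
qed

lemma cutoff_density_le:
  assumes "0 \<le> x" and c: "\<bar>deriv c x\<bar> \<le> a" "\<bar>deriv (deriv c) x\<bar> \<le> b"
  shows "cutoff_density \<mu> g c x \<le> 48 * ((deriv g x)\<^sup>2 * a\<^sup>2 * x powr (\<mu> + 1))
    + 12 * ((g x)\<^sup>2 * b\<^sup>2 * x powr (\<mu> + 1)) + 2 * ((g x)\<^sup>2 * a\<^sup>2 * ((x + 1) * x powr \<mu>))"
proof -
  have c2: "(deriv c x)\<^sup>2 \<le> a\<^sup>2" "(deriv (deriv c) x)\<^sup>2 \<le> b\<^sup>2"
    using c by (simp_all add: square_le_square_if_abs_le)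
  have "(deriv g x)\<^sup>2 * (deriv c x)\<^sup>2 * x powr (\<mu> + 1) \<le> (deriv g x)\<^sup>2 * a\<^sup>2 * x powr (\<mu> + 1)"
    "(g x)\<^sup>2 * (deriv (deriv c) x)\<^sup>2 * x powr (\<mu> + 1) \<le> (g x)\<^sup>2 * b\<^sup>2 * x powr (\<mu> + 1)"
    "(g x)\<^sup>2 * (deriv c x)\<^sup>2 * ((x + 1) * x powr \<mu>) \<le> (g x)\<^sup>2 * a\<^sup>2 * ((x + 1) * x powr \<mu>)"
    using c2 \<open>0 \<le> x\<close> by (intro mult_right_mono mult_left_mono; simp)+
  then show ?thesis unfolding cutoff_density_def by linarith
qed

lemma cutoff_density_le_near_0:
  assumes d: "0 < d" "2 * d \<le> 1" and x: "d \<le> x" "x \<le> 2 * d" and "2 \<le> \<mu>"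
    and g: "\<bar>g x\<bar> \<le> M" "\<bar>deriv g x\<bar> \<le> M"
    and c: "\<bar>deriv c x\<bar> \<le> C / d" "\<bar>deriv (deriv c) x\<bar> \<le> C / d\<^sup>2"
  shows "d * cutoff_density \<mu> g c x \<le> 200 * M\<^sup>2 * C\<^sup>2 * (2 * d) powr (\<mu> - 2)"
proof -
  define p where "p = (2 * d) powr (\<mu> - 2)"
  define K where "K = M\<^sup>2 * C\<^sup>2 * p"
  have "0 \<le> p" "0 \<le> K" by (simp_all add: p_def K_def)
  have w2: "x powr (\<mu> + 1) \<le> 8 * d ^ 3 * p"
    using powr_le_powr_mult_power[of x "2 * d" "\<mu> - 2" 3] \<open>2 \<le> \<mu>\<close> d x
    by (simp add: p_def algebra_simps)
  have "x powr \<mu> \<le> 4 * d\<^sup>2 * p"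
    using powr_le_powr_mult_power[of x "2 * d" "\<mu> - 2" 2] \<open>2 \<le> \<mu>\<close> d x
    by (simp add: p_def algebra_simps)
  then have w1: "(x + 1) * x powr \<mu> \<le> 2 * (4 * d\<^sup>2 * p)"
    using d x by (intro mult_mono) auto
  have g2: "(g x)\<^sup>2 \<le> M\<^sup>2" "(deriv g x)\<^sup>2 \<le> M\<^sup>2"
    using g by (simp_all add: square_le_square_if_abs_le)
  have "(deriv g x)\<^sup>2 * (C / d)\<^sup>2 * x powr (\<mu> + 1) \<le> M\<^sup>2 * (C / d)\<^sup>2 * (8 * d ^ 3 * p)"
    "(g x)\<^sup>2 * (C / d\<^sup>2)\<^sup>2 * x powr (\<mu> + 1) \<le> M\<^sup>2 * (C / d\<^sup>2)\<^sup>2 * (8 * d ^ 3 * p)"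
    "(g x)\<^sup>2 * (C / d)\<^sup>2 * ((x + 1) * x powr \<mu>) \<le> M\<^sup>2 * (C / d)\<^sup>2 * (2 * (4 * d\<^sup>2 * p))"
    using g2 w1 w2 x d by (intro mult3_mono; simp)+
  moreover have "M\<^sup>2 * (C / d)\<^sup>2 * (8 * d ^ 3 * p) = 8 * d * K"
    "M\<^sup>2 * (C / d\<^sup>2)\<^sup>2 * (8 * d ^ 3 * p) = 8 * K / d"
    "M\<^sup>2 * (C / d)\<^sup>2 * (2 * (4 * d\<^sup>2 * p)) = 8 * K"
    using d by (simp_all add: K_def field_simps power2_eq_square power3_eq_cube)
  ultimately have "cutoff_density \<mu> g c x \<le> 384 * d * K + 96 * K / d + 16 * K"
    using cutoff_density_le[OF _ c, of \<mu> g] d x by linarith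
  then have "d * cutoff_density \<mu> g c x \<le> 384 * d\<^sup>2 * K + 96 * K + 16 * d * K"
    using d mult_left_mono[of _ _ d] by (fastforce simp: field_simps power2_eq_square)
  also have "\<dots> \<le> 96 * K + 96 * K + 8 * K"
  proof -
    have "d\<^sup>2 \<le> 1 / 4" using d power_mono[of d "1/2" 2] by (simp add: power2_eq_square)
    then show ?thesis using d \<open>0 \<le> K\<close> by (intro add_mono mult_right_mono) auto
  qed
  finally show ?thesis by (simp add: K_def p_def mult_ac)
qed

lemma cutoff_density_le_near_infinity:
  assumes R: "1 \<le> R" and x: "R \<le> x" "x \<le> 2 * R"
    and g: "x powr (\<mu> + 1) * (deriv g x)\<^sup>2 \<le> \<eta>" "x powr \<mu> * (g x)\<^sup>2 \<le> \<eta>"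
    and c: "\<bar>deriv c x\<bar> \<le> C / R" "\<bar>deriv (deriv c) x\<bar> \<le> C / R\<^sup>2"
  shows "R * cutoff_density \<mu> g c x \<le> 78 * C\<^sup>2 * \<eta>"
proof -
  define K where "K = C\<^sup>2 * \<eta>"
  have "0 \<le> x powr \<mu> * (g x)\<^sup>2" by simp
  then have "0 \<le> \<eta>" using g(2) by linarith
  then have "0 \<le> K" by (simp add: K_def)
  have "x powr (\<mu> + 1) = x * x powr \<mu>"
    using R x by (simp add: powr_add)
  then have "R * ((deriv g x)\<^sup>2 * (C / R)\<^sup>2 * x powr (\<mu> + 1)) = C\<^sup>2 / R * (x powr (\<mu> + 1) * (deriv g x)\<^sup>2)"
    "R * ((g x)\<^sup>2 * (C / R\<^sup>2)\<^sup>2 * x powr (\<mu> + 1)) = C\<^sup>2 / R ^ 3 * x * (x powr \<mu> * (g x)\<^sup>2)"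
    "R * ((g x)\<^sup>2 * (C / R)\<^sup>2 * ((x + 1) * x powr \<mu>)) = C\<^sup>2 / R * (x + 1) * (x powr \<mu> * (g x)\<^sup>2)"
    using R by (simp_all add: field_simps power2_eq_square power3_eq_cube)
  moreover have "C\<^sup>2 / R * (x powr (\<mu> + 1) * (deriv g x)\<^sup>2) \<le> C\<^sup>2 / R * \<eta>"
    "C\<^sup>2 / R ^ 3 * x * (x powr \<mu> * (g x)\<^sup>2) \<le> C\<^sup>2 / R ^ 3 * (2 * R) * \<eta>"
    "C\<^sup>2 / R * (x + 1) * (x powr \<mu> * (g x)\<^sup>2) \<le> C\<^sup>2 / R * (3 * R) * \<eta>"
    using g R x by (intro mult_left_mono mult3_mono; simp)+
  moreover have "C\<^sup>2 / R * \<eta> \<le> K" "C\<^sup>2 / R ^ 3 * (2 * R) * \<eta> \<le> 2 * K"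
    "C\<^sup>2 / R * (3 * R) * \<eta> = 3 * K"
  proof -
    have "K / R \<le> K" "K / R\<^sup>2 \<le> K"
      using R \<open>0 \<le> K\<close> by (simp_all add: divide_le_eq mult_le_cancel_left1 one_le_power)
    moreover have "C\<^sup>2 / R * \<eta> = K / R" "C\<^sup>2 / R ^ 3 * (2 * R) * \<eta> = 2 * (K / R\<^sup>2)"
      using R by (simp_all add: K_def power2_eq_square power3_eq_cube)
    ultimately show "C\<^sup>2 / R * \<eta> \<le> K" "C\<^sup>2 / R ^ 3 * (2 * R) * \<eta> \<le> 2 * K"
      by linarith+
    show "C\<^sup>2 / R * (3 * R) * \<eta> = 3 * K"
      using R by (simp add: K_def)
  qed
  moreover have "R * cutoff_density \<mu> g c x
    \<le> 48 * (R * ((deriv g x)\<^sup>2 * (C / R)\<^sup>2 * x powr (\<mu> + 1)))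
      + 12 * (R * ((g x)\<^sup>2 * (C / R\<^sup>2)\<^sup>2 * x powr (\<mu> + 1)))
      + 2 * (R * ((g x)\<^sup>2 * (C / R)\<^sup>2 * ((x + 1) * x powr \<mu>)))"
    using mult_left_mono[OF cutoff_density_le[OF _ c, of \<mu> g], of R] R x
    by (simp add: distrib_left mult.left_commute)
  ultimately show ?thesis unfolding K_def by linarith
qed

section \<open>The plateau cutoff\<close>

definition plateau :: "real \<Rightarrow> real \<Rightarrow> real \<Rightarrow> real" where
  "plateau d R x = smooth_step (x / d) - smooth_step (x / R)"

lemma smooth_on_smooth_step_scaled: "smooth_on UNIV (\<lambda>x. smooth_step (x / a))"
  using smooth_on_compose_affine[OF smooth_on_smooth_step, of "inverse a" 0]
  by (simp add: divide_inverse mult.commute)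

lemma smooth_on_plateau: "smooth_on UNIV (plateau d R)"
  unfolding plateau_def[abs_def] by (intro smooth_on_diff smooth_on_smooth_step_scaled) simp

lemma plateau_eq_0:
  assumes "0 < d" "d \<le> R" "x < d \<or> 2 * R < x"
  shows "plateau d R x = 0"
proof (cases "x < d")
  case True
  then have "x / d \<le> 1" "x / R \<le> 1" using assms by (auto simp: divide_le_eq)
  then show ?thesis by (simp add: plateau_def smooth_step_eq_0)
next
  case False
  then have "2 \<le> x / d" "2 \<le> x / R" using assms by (auto simp: le_divide_eq)
  then show ?thesis by (simp add: plateau_def smooth_step_eq_1)
qed

lemma Cc_inf_mult_plateau:
  assumes "smooth_on {0<..} g" "0 < d" "d \<le> R"
  shows "Cc_inf (\<lambda>x. g x * plateau d R x)"
  unfolding Cc_inf_def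
proof
  show "smooth_on {0<..} (\<lambda>x. g x * plateau d R x)"
    using smooth_on_subset[OF smooth_on_plateau] assms(1) by (intro smooth_on_mult) auto
  have "\<forall>x>0. x \<notin> {d..2 * R} \<longrightarrow> g x * plateau d R x = 0"
    using plateau_eq_0[OF assms(2,3)] by auto
  then show "\<exists>a b. 0 < a \<and> a \<le> b \<and> (\<forall>x>0. x \<notin> {a..b} \<longrightarrow> g x * plateau d R x = 0)"
    using assms(2,3) by (intro exI[of _ d] exI[of _ "2 * R"]) auto
qed

lemma DERIV_compose_scale:
  assumes "smooth_on UNIV h"
  shows "((\<lambda>y. h (y / a)) has_real_derivative deriv h (x / a) / a) (at x)"
  using DERIV_chain2[OF smooth_on_imp_DERIV[OF assms UNIV_I] DERIV_cdivide[OF DERIV_ident, of a]]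
  by simp

lemma derivs_one_minus_plateau:
  "deriv (\<lambda>y. 1 - plateau d R y) = (\<lambda>y. deriv smooth_step (y / R) / R - deriv smooth_step (y / d) / d)"
  "deriv (deriv (\<lambda>y. 1 - plateau d R y))
     = (\<lambda>y. deriv (deriv smooth_step) (y / R) / R\<^sup>2 - deriv (deriv smooth_step) (y / d) / d\<^sup>2)"
proof -
  have step: "smooth_on UNIV smooth_step" "smooth_on UNIV (deriv smooth_step)"
    by (simp_all add: smooth_on_smooth_step smooth_on_deriv)
  show d1: "deriv (\<lambda>y. 1 - plateau d R y)
      = (\<lambda>y. deriv smooth_step (y / R) / R - deriv smooth_step (y / d) / d)"
  proof
    fix y
    have "((\<lambda>y. 1 - plateau d R y) has_real_derivative
        0 - (deriv smooth_step (y / d) / d - deriv smooth_step (y / R) / R)) (at y)"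
      unfolding plateau_def by (intro DERIV_diff DERIV_const DERIV_compose_scale step)
    then show "deriv (\<lambda>y. 1 - plateau d R y) y = deriv smooth_step (y / R) / R - deriv smooth_step (y / d) / d"
      by (simp add: DERIV_imp_deriv)
  qed
  show "deriv (deriv (\<lambda>y. 1 - plateau d R y))
     = (\<lambda>y. deriv (deriv smooth_step) (y / R) / R\<^sup>2 - deriv (deriv smooth_step) (y / d) / d\<^sup>2)"
  proof
    fix y
    have "((\<lambda>y. deriv smooth_step (y / R) / R - deriv smooth_step (y / d) / d) has_real_derivative
        deriv (deriv smooth_step) (y / R) / R / R - deriv (deriv smooth_step) (y / d) / d / d) (at y)"
      by (intro DERIV_diff DERIV_cdivide DERIV_compose_scale step)
    then show "deriv (deriv (\<lambda>y. 1 - plateau d R y)) y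
        = deriv (deriv smooth_step) (y / R) / R\<^sup>2 - deriv (deriv smooth_step) (y / d) / d\<^sup>2"
      unfolding d1 by (simp add: DERIV_imp_deriv power2_eq_square)
  qed
qed

lemma one_minus_plateau_sq_le:
  assumes "0 < d" "2 * d < R" "0 < x"
  shows "(1 - plateau d R x)\<^sup>2 \<le> indicator ({0<..2 * d} \<union> {R..}) x"
proof (cases "x \<le> 2 * d")
  case True
  then have "x / R \<le> 1" using assms by (simp add: divide_le_eq)
  then have "0 \<le> 1 - plateau d R x" "1 - plateau d R x \<le> 1"
    using smooth_step_bounds[of "x / d"] by (simp_all add: plateau_def smooth_step_eq_0)
  then show ?thesis using True assms by (simp add: power_le_one)
next
  case False
  then have "2 \<le> x / d" using assms by (simp add: le_divide_eq)
  then have c: "1 - plateau d R x = smooth_step (x / R)"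
    by (simp add: plateau_def smooth_step_eq_1)
  show ?thesis
  proof (cases "x < R")
    case True
    then have "x / R \<le> 1" using assms by (simp add: divide_le_eq)
    then show ?thesis by (simp add: c smooth_step_eq_0)
  next
    case False
    then show ?thesis using smooth_step_bounds[of "x / R"] by (simp add: c power_le_one)
  qed
qed

context
  fixes \<mu> d R C M \<eta> :: real and g :: "real \<Rightarrow> real"
  assumes \<mu>: "2 \<le> \<mu>" and d: "0 < d" "2 * d \<le> 1" "2 * d < R" and R: "1 \<le> R"
    and C: "\<And>t. \<bar>deriv smooth_step t\<bar> \<le> C \<and> \<bar>deriv (deriv smooth_step) t\<bar> \<le> C"
    and M: "\<And>y. 0 < y \<Longrightarrow> y \<le> 2 * d \<Longrightarrow> \<bar>g y\<bar> \<le> M \<and> \<bar>deriv g y\<bar> \<le> M"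
    and \<eta>: "\<And>y. R \<le> y \<Longrightarrow> y powr (\<mu> + 1) * (deriv g y)\<^sup>2 \<le> \<eta> \<and> y powr \<mu> * (g y)\<^sup>2 \<le> \<eta>"
begin

lemma decay_bound_nonneg: "0 \<le> \<eta>"
proof -
  have "0 \<le> R powr \<mu> * (g R)\<^sup>2" by simp
  then show ?thesis using \<eta>[of R, THEN conjunct2] by linarith
qed

lemma cutoff_density_plateau_le:
  "cutoff_density \<mu> g (\<lambda>y. 1 - plateau d R y) x
    \<le> 200 * M\<^sup>2 * C\<^sup>2 * (2 * d) powr (\<mu> - 2) / d * indicator {d..2 * d} x
      + 78 * C\<^sup>2 * \<eta> / R * indicator {R..2 * R} x"
proof -
  let ?c = "\<lambda>y. 1 - plateau d R y"
  consider (near_0) "x \<in> {d..2 * d}" | (near_infinity) "x \<in> {R..2 * R}"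
    | (flat) "x \<notin> {d..2 * d}" "x \<notin> {R..2 * R}"
    by blast
  then show ?thesis
  proof cases
    case near_0
    then have "x / R < 1" using d by (simp add: divide_less_eq)
    then have c: "deriv ?c x = - (deriv smooth_step (x / d) / d)"
      "deriv (deriv ?c) x = - (deriv (deriv smooth_step) (x / d) / d\<^sup>2)"
      by (subst derivs_one_minus_plateau; simp add: smooth_step_derivs_eq_0)+
    have "\<bar>deriv ?c x\<bar> \<le> C / d" "\<bar>deriv (deriv ?c) x\<bar> \<le> C / d\<^sup>2"
      unfolding c using C[of "x / d"] d by (simp_all add: divide_right_mono)
    with near_0 d M[of x] have "d * cutoff_density \<mu> g ?c x \<le> 200 * M\<^sup>2 * C\<^sup>2 * (2 * d) powr (\<mu> - 2)"
      by (intro cutoff_density_le_near_0 \<mu>) auto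
    then show ?thesis using near_0 d by (simp add: pos_le_divide_eq mult.commute)
  next
    case near_infinity
    then have "2 < x / d" using d by (simp add: less_divide_eq)
    then have c: "deriv ?c x = deriv smooth_step (x / R) / R"
      "deriv (deriv ?c) x = deriv (deriv smooth_step) (x / R) / R\<^sup>2"
      by (subst derivs_one_minus_plateau; simp add: smooth_step_derivs_eq_0)+
    have "\<bar>deriv ?c x\<bar> \<le> C / R" "\<bar>deriv (deriv ?c) x\<bar> \<le> C / R\<^sup>2"
      unfolding c using C[of "x / R"] R by (simp_all add: divide_right_mono)
    with near_infinity R \<eta>[of x] have "R * cutoff_density \<mu> g ?c x \<le> 78 * C\<^sup>2 * \<eta>"
      by (intro cutoff_density_le_near_infinity) auto
    then show ?thesis using near_infinity d R by (simp add: pos_le_divide_eq mult.commute)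
  next
    case flat
    then have "x / d < 1 \<or> 2 < x / d" "x / R < 1 \<or> 2 < x / R"
      using d R by (auto simp: divide_less_eq less_divide_eq)
    then have "deriv ?c x = 0" "deriv (deriv ?c) x = 0"
      by (subst derivs_one_minus_plateau; auto simp: smooth_step_derivs_eq_0)+
    with flat show ?thesis by (simp add: cutoff_density_def)
  qed
qed

lemma D_density_plateau_error_le:
  assumes g: "smooth_on {0<..} g" and "0 < x"
  shows "ennreal (D_density \<mu> (\<lambda>y. g y * (1 - plateau d R y)) x)
    \<le> 3 * (ennreal (D_density \<mu> g x) * indicator ({0<..2 * d} \<union> {R..}) x)
      + ennreal (200 * M\<^sup>2 * C\<^sup>2 * (2 * d) powr (\<mu> - 2) / d) * indicator {d..2 * d} x
      + ennreal (78 * C\<^sup>2 * \<eta> / R) * indicator {R..2 * R} x"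
proof -
  have "smooth_on {0<..} (\<lambda>y. 1 - plateau d R y)"
    using smooth_on_subset[OF smooth_on_plateau] by (intro smooth_on_diff smooth_on_const) auto
  from D_density_mult_le[OF open_greaterThan _ \<open>0 < x\<close> g this]
  have "D_density \<mu> (\<lambda>y. g y * (1 - plateau d R y)) x
      \<le> 3 * (1 - plateau d R x)\<^sup>2 * D_density \<mu> g x + cutoff_density \<mu> g (\<lambda>y. 1 - plateau d R y) x"
    using \<open>0 < x\<close> by simp
  moreover have "(1 - plateau d R x)\<^sup>2 * D_density \<mu> g x
      \<le> D_density \<mu> g x * indicator ({0<..2 * d} \<union> {R..}) x"
    using one_minus_plateau_sq_le[OF d(1,3) \<open>0 < x\<close>] D_density_nonneg[OF \<open>0 < x\<close>]
    by (simp add: mult.commute mult_left_mono)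
  ultimately have "ennreal (D_density \<mu> (\<lambda>y. g y * (1 - plateau d R y)) x)
    \<le> ennreal (3 * D_density \<mu> g x * indicator ({0<..2 * d} \<union> {R..}) x
      + 200 * M\<^sup>2 * C\<^sup>2 * (2 * d) powr (\<mu> - 2) / d * indicator {d..2 * d} x
      + 78 * C\<^sup>2 * \<eta> / R * indicator {R..2 * R} x)"
    using cutoff_density_plateau_le[of x] by (intro ennreal_leI) linarith
  also have "\<dots> = 3 * (ennreal (D_density \<mu> g x) * indicator ({0<..2 * d} \<union> {R..}) x)
      + ennreal (200 * M\<^sup>2 * C\<^sup>2 * (2 * d) powr (\<mu> - 2) / d) * indicator {d..2 * d} x
      + ennreal (78 * C\<^sup>2 * \<eta> / R) * indicator {R..2 * R} x"
    using D_density_nonneg[OF \<open>0 < x\<close>] decay_bound_nonneg d R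
    by (simp add: ennreal_plus ennreal_mult' mult.assoc split: split_indicator)
  finally show ?thesis .
qed

lemma D_norm_sq_plateau_error_le:
  assumes g: "smooth_on {0<..} g"
  shows "D_norm_sq \<mu> (\<lambda>x. g x - g x * plateau d R x)
    \<le> 3 * (\<integral>\<^sup>+x \<in> {0<..2 * d} \<union> {R..}. ennreal (D_density \<mu> g x) \<partial>lborel)
      + ennreal (200 * M\<^sup>2 * C\<^sup>2 * (2 * d) powr (\<mu> - 2) + 78 * C\<^sup>2 * \<eta>)"
proof -
  define T where "T = {0<..2 * d} \<union> {R..}"
  define K1 where "K1 = 200 * M\<^sup>2 * C\<^sup>2 * (2 * d) powr (\<mu> - 2)"
  define K2 where "K2 = 78 * C\<^sup>2 * \<eta>"
  have "0 \<le> K1" "0 \<le> K2" using decay_bound_nonneg by (simp_all add: K1_def K2_def)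
  have "T \<subseteq> {0<..}" using d R by (auto simp: T_def)
  then have [measurable]: "(\<lambda>x. ennreal (D_density \<mu> g x) * indicator T x) \<in> borel_measurable borel"
    by (intro borel_measurable_ennreal_indicator_continuous_on
        continuous_on_subset[OF continuous_on_D_density[OF g]]) (auto simp: T_def)
  have "smooth_on {0<..} (\<lambda>x. g x * (1 - plateau d R x))"
    using smooth_on_subset[OF smooth_on_plateau]
    by (intro smooth_on_mult smooth_on_diff smooth_on_const g) auto
  moreover have "(\<lambda>x. g x - g x * plateau d R x) = (\<lambda>x. g x * (1 - plateau d R x))"
    by (simp add: algebra_simps)
  ultimately have "D_norm_sq \<mu> (\<lambda>x. g x - g x * plateau d R x)
      = (\<integral>\<^sup>+x. ennreal (D_density \<mu> (\<lambda>y. g y * (1 - plateau d R y)) x) * indicator {0<..} x \<partial>lborel)"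
    by (simp add: D_norm_sq_eq_nn_integral)
  also have "\<dots> \<le> (\<integral>\<^sup>+x. 3 * (ennreal (D_density \<mu> g x) * indicator T x)
      + ennreal (K1 / d) * indicator {d..2 * d} x + ennreal (K2 / R) * indicator {R..2 * R} x \<partial>lborel)"
    using D_density_plateau_error_le[OF g]
    by (intro nn_integral_mono) (auto simp: T_def K1_def K2_def split: split_indicator)
  also have "\<dots> = 3 * (\<integral>\<^sup>+x. ennreal (D_density \<mu> g x) * indicator T x \<partial>lborel)
      + ennreal (K1 / d) * ennreal d + ennreal (K2 / R) * ennreal R"
    using d R by (simp add: nn_integral_add nn_integral_cmult nn_integral_cmult_indicator)
  also have "\<dots> = 3 * (\<integral>\<^sup>+x. ennreal (D_density \<mu> g x) * indicator T x \<partial>lborel) + ennreal (K1 + K2)"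
    using d R \<open>0 \<le> K1\<close> \<open>0 \<le> K2\<close> by (simp add: ennreal_plus flip: ennreal_mult)
  finally show ?thesis by (simp add: T_def K1_def K2_def)
qed

end

lemma Cinf_mu_bounded_near_0:
  assumes "Cinf_mu \<mu> g"
  obtains M b where "0 < b" "\<And>y. 0 < y \<Longrightarrow> y < b \<Longrightarrow> \<bar>g y\<bar> \<le> M \<and> \<bar>deriv g y\<bar> \<le> M"
proof -
  obtain n :: nat where "Limsup (at_right 0) (\<lambda>x. ereal (\<bar>g x\<bar> + \<bar>deriv g x\<bar>)) < ereal (real n)"
    using assms less_PInf_Ex_of_nat by (auto simp: Cinf_mu_def)
  then have "\<forall>\<^sub>F x in at_right 0. ereal (\<bar>g x\<bar> + \<bar>deriv g x\<bar>) < ereal (real n)"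
    by (rule Limsup_lessD)
  then obtain b where "0 < b" and sum: "\<And>y. 0 < y \<Longrightarrow> y < b \<Longrightarrow> \<bar>g y\<bar> + \<bar>deriv g y\<bar> < real n"
    unfolding eventually_at_right_field by auto
  have "\<bar>g y\<bar> \<le> real n \<and> \<bar>deriv g y\<bar> \<le> real n" if "0 < y" "y < b" for y
    using sum[OF that] abs_ge_zero[of "g y"] abs_ge_zero[of "deriv g y"] by linarith
  with \<open>0 < b\<close> show ?thesis by (rule that)
qed

lemma Cinf_mu_decay:
  assumes "Cinf_mu \<mu> g" "0 < \<eta>"
  obtains N where "\<And>y. N \<le> y \<Longrightarrow> y powr (\<mu> + 1) * (deriv g y)\<^sup>2 \<le> \<eta> \<and> y powr \<mu> * (g y)\<^sup>2 \<le> \<eta>"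
proof -
  have "\<forall>\<^sub>F y in at_top. y powr (\<mu> + 1) * (deriv g y)\<^sup>2 + y powr \<mu> * (g y)\<^sup>2 < \<eta>"
    using assms by (intro order_tendstoD(2)) (auto simp: Cinf_mu_def)
  then obtain N where sum: "\<And>y. N \<le> y \<Longrightarrow> y powr (\<mu> + 1) * (deriv g y)\<^sup>2 + y powr \<mu> * (g y)\<^sup>2 < \<eta>"
    unfolding eventually_at_top_linorder by auto
  have "y powr (\<mu> + 1) * (deriv g y)\<^sup>2 \<le> \<eta> \<and> y powr \<mu> * (g y)\<^sup>2 \<le> \<eta>" if "N \<le> y" for y
  proof -
    have "0 \<le> y powr (\<mu> + 1) * (deriv g y)\<^sup>2" "0 \<le> y powr \<mu> * (g y)\<^sup>2" by simp_all
    with sum[OF that] show ?thesis by linarith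
  qed
  then show ?thesis by (rule that)
qed

lemma exists_small_powr:
  fixes K p a s :: real
  assumes "0 < p" "0 < a" "0 < s"
  obtains t where "0 < t" "t \<le> a" "K * t powr p \<le> s"
proof -
  have "((\<lambda>t. t powr p) \<longlongrightarrow> 0) (at_right 0)"
    using \<open>0 < p\<close> by (intro tendsto_zero_powrI tendsto_ident_at tendsto_const)
       (auto intro: eventually_at_rightI[of 0 1])
  from tendsto_mult_right_zero[OF this, of K]
  have "\<forall>\<^sub>F t in at_right 0. K * t powr p < s"
    using \<open>0 < s\<close> by (rule order_tendstoD(2))
  then obtain b where "0 < b" "\<And>t. 0 < t \<Longrightarrow> t < b \<Longrightarrow> K * t powr p < s"
    unfolding eventually_at_right_field by auto
  then show ?thesis
    using \<open>0 < a\<close> by (intro that[of "min a (b / 2)"]) (auto intro: less_imp_le)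
qed

lemma plateau_approximation:
  assumes "2 < \<mu>" and g: "Cinf_mu \<mu> g" "D_norm_sq \<mu> g < \<infinity>" and "0 < s"
  obtains d R where "0 < d" "d \<le> R" "D_norm_sq \<mu> (\<lambda>x. g x - g x * plateau d R x) \<le> ennreal (5 * s)"
proof -
  have smooth: "smooth_on {0<..} g" using g(1) by (simp add: Cinf_mu_def)
  obtain C where "0 < C" and C: "\<And>t. \<bar>deriv smooth_step t\<bar> \<le> C \<and> \<bar>deriv (deriv smooth_step) t\<bar> \<le> C"
    using smooth_step_derivs_bounded by blast
  obtain M b where "0 < b" and M: "\<And>y. 0 < y \<Longrightarrow> y < b \<Longrightarrow> \<bar>g y\<bar> \<le> M \<and> \<bar>deriv g y\<bar> \<le> M"
    using Cinf_mu_bounded_near_0[OF g(1)] by blast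
  obtain \<delta> R1 where "0 < \<delta>"
    and tails: "(\<integral>\<^sup>+x \<in> {0<..\<delta>} \<union> {R1..}. ennreal (D_density \<mu> g x) \<partial>lborel) < s"
    using D_density_tails_less[OF smooth g(2), of s] \<open>0 < s\<close> by auto
  define \<eta> where "\<eta> = s / (78 * C\<^sup>2)"
  obtain N where \<eta>: "\<And>y. N \<le> y \<Longrightarrow> y powr (\<mu> + 1) * (deriv g y)\<^sup>2 \<le> \<eta> \<and> y powr \<mu> * (g y)\<^sup>2 \<le> \<eta>"
    using Cinf_mu_decay[OF g(1), of \<eta>] \<open>0 < s\<close> \<open>0 < C\<close> by (auto simp: \<eta>_def)
  obtain t where t: "0 < t" "t \<le> min 1 (min \<delta> (b / 2))" "200 * M\<^sup>2 * C\<^sup>2 * t powr (\<mu> - 2) \<le> s"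
    using exists_small_powr[of "\<mu> - 2" "min 1 (min \<delta> (b / 2))" s] \<open>2 < \<mu>\<close> \<open>0 < \<delta>\<close> \<open>0 < b\<close> \<open>0 < s\<close>
    by auto
  define d where "d = t / 2"
  define R where "R = max (max 1 R1) (max N (t + 1))"
  have R: "1 \<le> R" "R1 \<le> R" "N \<le> R" "t + 1 \<le> R" by (simp_all add: R_def)
  have "D_norm_sq \<mu> (\<lambda>x. g x - g x * plateau d R x)
    \<le> 3 * (\<integral>\<^sup>+x \<in> {0<..2 * d} \<union> {R..}. ennreal (D_density \<mu> g x) \<partial>lborel)
      + ennreal (200 * M\<^sup>2 * C\<^sup>2 * (2 * d) powr (\<mu> - 2) + 78 * C\<^sup>2 * \<eta>)"
    using t R \<open>0 < b\<close> \<open>2 < \<mu>\<close>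
    by (intro D_norm_sq_plateau_error_le smooth C M \<eta>) (auto simp: d_def)
  also have "\<dots> \<le> 3 * ennreal s + ennreal (s + s)"
  proof (intro add_mono ennreal_leI mult_left_mono)
    have "{0<..2 * d} \<union> {R..} \<subseteq> {0<..\<delta>} \<union> {R1..}"
      using t R by (auto simp: d_def)
    then show "(\<integral>\<^sup>+x \<in> {0<..2 * d} \<union> {R..}. ennreal (D_density \<mu> g x) \<partial>lborel) \<le> ennreal s"
      using order.trans[OF nn_set_integral_set_mono less_imp_le[OF tails]] by blast
    show "200 * M\<^sup>2 * C\<^sup>2 * (2 * d) powr (\<mu> - 2) \<le> s" "78 * C\<^sup>2 * \<eta> \<le> s"
      using t \<open>0 < C\<close> by (simp_all add: d_def \<eta>_def)
  qed simp
  also have "\<dots> = ennreal (5 * s)"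
    using \<open>0 < s\<close> by (simp add: ennreal_mult ennreal_plus flip: distrib_right)
  finally show ?thesis using t R by (intro that[of d R]) (auto simp: d_def)
qed

theorem lemma3:
  fixes \<mu> :: real and g :: "real \<Rightarrow> real" and \<epsilon> :: real
  assumes "\<mu> > 2"
    and "Cinf_mu \<mu> g" and "D_norm_sq \<mu> g < \<infinity>"
    and "\<epsilon> > 0"
  shows "\<exists>\<phi>. Cc_inf \<phi> \<and> D_norm_sq \<mu> (\<lambda>x. g x - \<phi> x) < ennreal (\<epsilon>\<^sup>2)"
proof -
  have smooth: "smooth_on {0<..} g" using assms(2) by (simp add: Cinf_mu_def)
  obtain d R where "0 < d" "d \<le> R"
    and error: "D_norm_sq \<mu> (\<lambda>x. g x - g x * plateau d R x) \<le> ennreal (5 * (\<epsilon>\<^sup>2 / 6))"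
    using plateau_approximation[OF assms(1-3), of "\<epsilon>\<^sup>2 / 6"] assms(4) by auto
  have "ennreal (5 * (\<epsilon>\<^sup>2 / 6)) < ennreal (\<epsilon>\<^sup>2)"
    using assms(4) by (intro ennreal_lessI) simp_all
  with error have "D_norm_sq \<mu> (\<lambda>x. g x - g x * plateau d R x) < ennreal (\<epsilon>\<^sup>2)"
    by (rule le_less_trans)
  moreover have "Cc_inf (\<lambda>x. g x * plateau d R x)"
    using Cc_inf_mult_plateau[OF smooth \<open>0 < d\<close> \<open>d \<le> R\<close>] .
  ultimately show ?thesis by blast
qed

end
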